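(* Let $\mathcal{T}$ be the set of integer triples $(A,B,C)$ with $A\le B\le C$, $A+B+C>0$, $\gcd(A,B,C)=1$ and $AB+BC+CA=q^2$ for some integer $q\ge 0$. Define $T:\mathcal{T}\to\mathbb{Z}^3$ by $T(A,B,C)=\mathrm{sort}(-A,\,B+2A,\,C+2A)$ if $A<0$, and $T(A,B,C)=\mathrm{sort}(A,\,B,\,A+B+C-2\sqrt{AB+BC+CA})$ if $A\ge 0$, where $\mathrm{sort}$ arranges the entries in non-decreasing order. Then $T$ maps $\mathcal{T}$ into $\mathcal{T}$, $T(0,0,1)=(0,0,1)$, and $A'+B'+C'<A+B+C$ for $(A',B',C')=T(A,B,C)$ whenever $(A,B,C)\ne(0,0,1)$. Consequently, for every $(A,B,C)\in\mathcal{T}$ some iterate $T^k(A,B,C)$ equals $(0,0,1)$. *)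

theory Defs
  imports Main
begin

type_synonym triple = "int \<times> int \<times> int"

definition sort3 :: "int \<Rightarrow> int \<Rightarrow> int \<Rightarrow> triple" where
  "sort3 x y z = (case sort [x, y, z] of [a, b, c] \<Rightarrow> (a, b, c))"

definition calT :: "triple set" where
  "calT = {(A, B, C). A \<le> B \<and> B \<le> C \<and> A + B + C > 0 \<and> gcd A (gcd B C) = 1 \<and>
            (\<exists>q::int. q \<ge> 0 \<and> A*B + B*C + C*A = q^2)}"

definition sqrtZ :: "int \<Rightarrow> int" where
  "sqrtZ s = (THE q. q \<ge> 0 \<and> q^2 = s)"

definition Tmap :: "triple \<Rightarrow> triple" where
  "Tmap t = (case t of (A, B, C) \<Rightarrow>
     if A < 0 then sort3 (-A) (B + 2*A) (C + 2*A)
     else sort3 A B (A + B + C - 2 * sqrtZ (A*B + B*C + C*A)))"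

definition tsum :: "triple \<Rightarrow> int" where
  "tsum t = (case t of (A, B, C) \<Rightarrow> A + B + C)"

end

theory Submission
  imports Defs
begin

text \<open>Write Q(A,B,C) = AB + BC + CA = q^2. For A < 0 the map is a reflection preserving Q that
lowers the sum by -2A, and Q \<ge> 0 forces 4(-A) \<le> B + C, so the new sum 3A+B+C stays positive.
For A \<ge> 0, replacing C by C' = A+B+C-2q gives Q(A,B,C') = (A+B-q)^2; the sum drops because
(A+B)^2 < 4q^2 and stays positive because 4q^2 < (C+2A+2B)^2. A common divisor of A, B, C'
is coprime to C but divides q^2 and C - 2q, hence C^2, so primitivity is preserved.
Since the sum is a positive integer, iterating T must reach the fixed point (0,0,1).\<close>

lemma sort3_unfold:
  "sort3 x y z =
     (if x \<le> y then if y \<le> z then (x, y, z) else if x \<le> z then (x, z, y) else (z, x, y)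
      else if x \<le> z then (y, x, z) else if y \<le> z then (y, z, x) else (z, y, x))"
  unfolding sort3_def by auto

lemma tsum_sort3 [simp]: "tsum (sort3 x y z) = x + y + z"
  by (simp add: sort3_unfold tsum_def)

lemma sort3_in_calT:
  assumes "0 < x + y + z" "gcd x (gcd y z) = 1" "0 \<le> q" "x*y + y*z + z*x = q^2"
  shows "sort3 x y z \<in> calT"
  using assms unfolding calT_def sort3_unfold by (auto simp: ac_simps)

lemma gcd_add_mult_right: "gcd a (b + k*a) = gcd a (b::int)"
  using gcd_add_mult[of a k b] by (simp add: add.commute)

lemma gcd3_add_multiples: "gcd a (gcd (b + k*a) (c + l*a)) = gcd a (gcd b (c::int))"
  by (metis gcd.assoc gcd.left_commute gcd_add_mult_right)

lemma gcd3_root_reflection_eq_1: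
  fixes a b c q :: int
  assumes coprime: "gcd a (gcd b c) = 1" and form: "a*b + b*c + c*a = q^2"
  shows "gcd a (gcd b (a + b + c - 2*q)) = 1"
proof -
  define d where "d = gcd a (gcd b (a + b + c - 2*q))"
  have "d dvd a" "d dvd b" "d dvd a + b + c - 2*q"
    unfolding d_def by (meson dvd_trans gcd_dvd1 gcd_dvd2)+
  then have "d dvd (a + b + c - 2*q) - a - b"
    by (simp only: dvd_diff)
  then have "d dvd c - 2*q"
    by (simp add: algebra_simps)
  have "coprime d c"
  proof (rule coprimeI)
    fix e assume "e dvd d" "e dvd c"
    then have "e dvd gcd a (gcd b c)"
      using \<open>d dvd a\<close> \<open>d dvd b\<close> by (meson dvd_trans gcd_greatest)
    then show "is_unit e"
      using coprime by simp
  qed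
  have "q^2 = a*b + c*(a + b)"
    using form by (simp add: algebra_simps)
  then have "d dvd q^2"
    using \<open>d dvd a\<close> \<open>d dvd b\<close> by simp
  moreover have "c^2 = (c - 2*q) * (c + 2*q) + 4 * q^2"
    by (simp add: algebra_simps power2_eq_square)
  ultimately have "d dvd c^2"
    using \<open>d dvd c - 2*q\<close> by simp
  then have "is_unit d"
    using \<open>coprime d c\<close> coprime_common_divisor[of d "c^2" d] by simp
  then show ?thesis
    unfolding d_def by simp
qed

lemma quadform_neg_reflection:
  fixes a b c :: "'a::comm_ring_1"
  shows "(-a)*(b + 2*a) + (b + 2*a)*(c + 2*a) + (c + 2*a)*(-a) = a*b + b*c + c*a"
  by (simp add: algebra_simps)

lemma quadform_root_reflection:
  fixes a b c q :: "'a::comm_ring_1"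
  assumes "a*b + b*c + c*a = q^2"
  shows "a*b + b*(a + b + c - 2*q) + (a + b + c - 2*q)*a = (a + b - q)^2"
proof -
  have "a*b + b*(a + b + c - 2*q) + (a + b + c - 2*q)*a = (a + b - q)^2 + (a*b + b*c + c*a - q^2)"
    by (simp add: algebra_simps power2_eq_square)
  with assms show ?thesis
    by simp
qed

lemma neg_reflection_sum_pos:
  fixes a b c :: "'a::linordered_idom"
  assumes "a < 0" "0 < a + b + c" "0 \<le> a*b + b*c + c*a"
  shows "0 < 3*a + b + c"
proof -
  have "4 * (b*c) \<le> (b + c) * (b + c)"
    using zero_le_square[of "b - c"] by (simp add: algebra_simps)
  moreover have "(-a) * (b + c) \<le> b*c"
    using assms(3) by (simp add: algebra_simps)
  ultimately have "(4 * (-a)) * (b + c) \<le> (b + c) * (b + c)"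
    by (simp add: algebra_simps)
  moreover have "0 < b + c"
    using assms by simp
  ultimately have "4 * (-a) \<le> b + c"
    by (rule mult_right_le_imp_le)
  with assms(1) show ?thesis
    by simp
qed

lemma root_reflection_bounds:
  fixes a b c q :: "'a::linordered_idom"
  assumes "0 \<le> a" "a \<le> b" "b \<le> c" "0 < b" "0 \<le> q" and form: "a*b + b*c + c*a = q^2"
  shows "a + b < 2*q" and "2*q < c + 2*a + 2*b"
proof -
  have four_q2: "(2*q)^2 = 4*(a*b) + 4*(a*c) + 4*(b*c)"
    using form by (simp add: algebra_simps power2_eq_square)
  have "b*(a + b) \<le> c*(a + b)"
    using assms by (intro mult_right_mono) auto
  then have "a*b + b*b \<le> a*c + b*c"
    by (simp add: algebra_simps)
  moreover have "a*a \<le> a*b" "0 < b*b" "0 \<le> a*b"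
    using assms by (auto intro: mult_left_mono)
  moreover have "(a + b)^2 = a*a + 2*(a*b) + b*b"
    by (simp add: algebra_simps power2_eq_square)
  ultimately have "(a + b)^2 < (2*q)^2"
    unfolding four_q2 by linarith
  then show "a + b < 2*q"
    by (rule power_less_imp_less_base) (use assms in simp)
  have "0 < c*c" "0 \<le> a*a" "0 \<le> a*b" "0 \<le> b*b"
    using assms by simp_all
  moreover have "(c + 2*a + 2*b)^2 = c*c + 4*(a*c) + 4*(b*c) + 4*(a*a) + 8*(a*b) + 4*(b*b)"
    by (simp add: algebra_simps power2_eq_square)
  ultimately have "(2*q)^2 < (c + 2*a + 2*b)^2"
    unfolding four_q2 by linarith
  then show "2*q < c + 2*a + 2*b"
    by (rule power_less_imp_less_base) (use assms in simp)
qed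

lemma sqrtZ_power2: "0 \<le> q \<Longrightarrow> sqrtZ (q^2) = q"
  unfolding sqrtZ_def by (rule the_equality) (auto simp: power2_eq_imp_eq)

lemma Tmap_neg_descends:
  assumes t: "(A, B, C) \<in> calT" and "A < 0"
  shows "Tmap (A, B, C) \<in> calT \<and> tsum (Tmap (A, B, C)) < A + B + C"
proof -
  from t obtain q where "0 < A + B + C" and coprime: "gcd A (gcd B C) = 1"
    and "0 \<le> q" and form: "A*B + B*C + C*A = q^2"
    unfolding calT_def by auto
  have "Tmap (A, B, C) = sort3 (-A) (B + 2*A) (C + 2*A)"
    using \<open>A < 0\<close> by (simp add: Tmap_def)
  moreover have "sort3 (-A) (B + 2*A) (C + 2*A) \<in> calT"
  proof (rule sort3_in_calT)
    show "0 < -A + (B + 2*A) + (C + 2*A)"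
      using neg_reflection_sum_pos[of A B C] \<open>A < 0\<close> \<open>0 < A + B + C\<close> form by simp
    show "gcd (-A) (gcd (B + 2*A) (C + 2*A)) = 1"
      using coprime by (simp only: gcd_neg1 gcd3_add_multiples)
    show "(-A)*(B + 2*A) + (B + 2*A)*(C + 2*A) + (C + 2*A)*(-A) = q^2"
      using form by (simp only: quadform_neg_reflection)
  qed fact
  ultimately show ?thesis
    using \<open>A < 0\<close> by simp
qed

lemma Tmap_nonneg_descends:
  assumes t: "(A, B, C) \<in> calT" and "0 \<le> A" and "(A, B, C) \<noteq> (0, 0, 1)"
  shows "Tmap (A, B, C) \<in> calT \<and> tsum (Tmap (A, B, C)) < A + B + C"
proof -
  from t obtain q where "A \<le> B" "B \<le> C" "0 < A + B + C" and coprime: "gcd A (gcd B C) = 1"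
    and "0 \<le> q" and form: "A*B + B*C + C*A = q^2"
    unfolding calT_def by auto
  have "0 < B"
  proof (rule ccontr)
    assume "\<not> 0 < B"
    then have "A = 0" "B = 0"
      using \<open>0 \<le> A\<close> \<open>A \<le> B\<close> by auto
    with coprime \<open>0 < A + B + C\<close> have "C = 1"
      by simp
    with \<open>A = 0\<close> \<open>B = 0\<close> assms(3) show False
      by simp
  qed
  note bounds = root_reflection_bounds[OF \<open>0 \<le> A\<close> \<open>A \<le> B\<close> \<open>B \<le> C\<close> \<open>0 < B\<close> \<open>0 \<le> q\<close> form]
  have "Tmap (A, B, C) = sort3 A B (A + B + C - 2*q)"
    using \<open>0 \<le> A\<close> \<open>0 \<le> q\<close> by (simp add: Tmap_def form sqrtZ_power2)
  moreover have "sort3 A B (A + B + C - 2*q) \<in> calT"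
  proof (rule sort3_in_calT)
    show "0 < A + B + (A + B + C - 2*q)"
      using bounds by simp
    show "gcd A (gcd B (A + B + C - 2*q)) = 1"
      using coprime form by (rule gcd3_root_reflection_eq_1)
    show "A*B + B*(A + B + C - 2*q) + (A + B + C - 2*q)*A = \<bar>A + B - q\<bar>^2"
      using form by (simp add: quadform_root_reflection)
  qed simp
  ultimately show ?thesis
    using bounds by simp
qed

lemma Tmap_descends:
  assumes "t \<in> calT" "t \<noteq> (0, 0, 1)"
  shows "Tmap t \<in> calT \<and> tsum (Tmap t) < tsum t"
proof -
  obtain A B C where t: "t = (A, B, C)"
    by (cases t)
  show ?thesis
    using assms Tmap_neg_descends[of A B C] Tmap_nonneg_descends[of A B C]
    unfolding t by (cases "A < 0") (simp_all add: tsum_def)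
qed

lemma Tmap_fixpoint: "Tmap (0, 0, 1) = (0, 0, 1)"
  using sqrtZ_power2[of 0] by (simp add: Tmap_def sort3_unfold)

lemma tsum_pos_calT: "t \<in> calT \<Longrightarrow> 0 < tsum t"
  unfolding calT_def tsum_def by auto

lemma funpow_reaches_by_descent:
  fixes f :: "'a \<Rightarrow> 'a" and m :: "'a \<Rightarrow> nat"
  assumes "\<And>x. x \<in> S \<Longrightarrow> x \<noteq> x0 \<Longrightarrow> f x \<in> S \<and> m (f x) < m x" and "x \<in> S"
  shows "\<exists>k. (f ^^ k) x = x0"
  using \<open>x \<in> S\<close>
proof (induction "m x" arbitrary: x rule: less_induct)
  case less
  show ?case
  proof (cases "x = x0")
    case True
    then show ?thesis
      by (intro exI[of _ 0]) simp
  next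
    case False
    with assms(1) less.prems obtain k where "(f ^^ k) (f x) = x0"
      using less.hyps by blast
    then have "(f ^^ Suc k) x = x0"
      by (simp add: funpow_Suc_right del: funpow.simps)
    then show ?thesis ..
  qed
qed

theorem mainTheorem7:
  shows "(\<forall>t \<in> calT. Tmap t \<in> calT)
       \<and> Tmap (0, 0, 1) = (0, 0, 1)
       \<and> (\<forall>t \<in> calT. t \<noteq> (0, 0, 1) \<longrightarrow> tsum (Tmap t) < tsum t)
       \<and> (\<forall>t \<in> calT. \<exists>k::nat. (Tmap ^^ k) t = (0, 0, 1))"
proof (intro conjI ballI impI)
  fix t assume "t \<in> calT"
  then show "Tmap t \<in> calT"
    using Tmap_descends Tmap_fixpoint by (cases "t = (0, 0, 1)") auto
  show "\<exists>k. (Tmap ^^ k) t = (0, 0, 1)"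
  proof (rule funpow_reaches_by_descent[where m = "\<lambda>t. nat (tsum t)"])
    fix s assume "s \<in> calT" "s \<noteq> (0, 0, 1)"
    then show "Tmap s \<in> calT \<and> nat (tsum (Tmap s)) < nat (tsum s)"
      using Tmap_descends tsum_pos_calT by fastforce
  qed fact
next
  show "Tmap (0, 0, 1) = (0, 0, 1)"
    by (rule Tmap_fixpoint)
next
  fix t assume "t \<in> calT" "t \<noteq> (0, 0, 1)"
  then show "tsum (Tmap t) < tsum t"
    using Tmap_descends by blast
qed

end
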